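(* Let $n\ge 4$ and $r_1\ge r_2\ge\cdots\ge r_n>0$. If $r_4+\cdots+r_n<r_3$, then there exists a homothetic packing of $n$ cubes with radii $r_1,\ldots,r_n$ and at least $4n-11$ face-to-face contacts (and hence more than $3n-3$ face-to-face contacts when $n\ge 9$).
   Context: Let $C=\{(x,y,z):-1\le x,y,z\le 1\}\subset\mathbb{R}^3$. A homothetic cube packing with radii $r_1,\ldots,r_n$ is a set $\{C_1,\ldots,C_n\}$ with $C_i=r_iC+p_i$, $p_i\in\mathbb{R}^3$, whose interiors are pairwise disjoint. A face-to-face contact is an unordered pair $\{i,j\}$, $i\ne j$, such that $C_i\cap C_j$ is a $2$-dimensional convex set. *)

theory Defs
  imports "HOL-Analysis.Analysis"
begin

definition std_cube :: "(real^3) set" where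
  "std_cube = cbox (\<chi> i. -1) (\<chi> i. 1)"

definition hcube :: "real \<Rightarrow> real^3 \<Rightarrow> (real^3) set" where
  "hcube r p = (\<lambda>x. p + r *\<^sub>R x) ` std_cube"

definition homothetic_cube_packing :: "nat \<Rightarrow> (nat \<Rightarrow> real) \<Rightarrow> (nat \<Rightarrow> real^3) \<Rightarrow> bool" where
  "homothetic_cube_packing n r p \<longleftrightarrow>
     (\<forall>i\<in>{1..n}. \<forall>j\<in>{1..n}. i \<noteq> j \<longrightarrow>
        interior (hcube (r i) (p i)) \<inter> interior (hcube (r j) (p j)) = {})"

definition face_contact :: "(real^3) set \<Rightarrow> (real^3) set \<Rightarrow> bool" where
  "face_contact A B \<longleftrightarrow> convex (A \<inter> B) \<and> aff_dim (A \<inter> B) = 2"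

definition face_contacts :: "nat \<Rightarrow> (nat \<Rightarrow> real) \<Rightarrow> (nat \<Rightarrow> real^3) \<Rightarrow> nat set set" where
  "face_contacts n r p =
     {{i, j} | i j. i \<in> {1..n} \<and> j \<in> {1..n} \<and> i \<noteq> j \<and>
        face_contact (hcube (r i) (p i)) (hcube (r j) (p j))}"

end

theory Submission
  imports Defs
begin

text \<open>
  Place cubes 1 and 2 below the plane \<open>z = 0\<close>, meeting along the plane \<open>x = 0\<close>, and let
  cube 3 stand on cube 2 in the half-space \<open>x \<ge> r\<^sub>n\<close>. The small cubes \<open>4, \<dots>, n\<close> form a
  row along the \<open>y\<close>-axis on the plane \<open>z = 0\<close>, with their faces \<open>x = r\<^sub>n\<close> against cube 3.
  Since \<open>r\<^sub>n \<le> r\<^sub>k\<close>, every small cube straddles the plane \<open>x = 0\<close>, so it rests on both cubes 1 and 2;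
  since \<open>r\<^sub>4 + \<dots> + r\<^sub>n < r\<^sub>3\<close>, the row stays within the \<open>y\<close>-extent of cube 3. This gives the
  contacts 1--2, 2--3, the three contacts of each small cube with cubes 1, 2, 3 and the
  \<open>n - 4\<close> contacts between neighbours in the row: \<open>2 + 3(n - 3) + (n - 4) = 4n - 11\<close> in total.
\<close>

lemma hcube_eq_cbox:
  assumes "0 \<le> r"
  shows "hcube r p = cbox (p - r *\<^sub>R 1) (p + r *\<^sub>R 1)"
proof -
  have affinity: "(\<lambda>x. p + r *\<^sub>R x) = (\<lambda>x. r *\<^sub>R x + p)" by (auto simp: add.commute)
  have "cbox (\<chi> i. -1) (\<chi> i. 1) \<noteq> ({} :: (real^3) set)"
    by (auto simp: interval_eq_empty_cart)
  then show ?thesis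
    unfolding hcube_def std_cube_def affinity image_affinity_cbox using assms
    by (auto simp: vec_eq_iff intro!: arg_cong2[where f=cbox])
qed

lemma aff_dim_cbox_flat:
  fixes u v :: "real^'n"
  assumes flat: "u$k = v$k" and thick: "\<And>i. i \<noteq> k \<Longrightarrow> u$i < v$i"
  shows "aff_dim (cbox u v) = int CARD('n) - 1"
proof -
  define H where "H = {x. axis k (1::real) \<bullet> x = u$k}"
  have dim_H: "aff_dim H = int CARD('n) - 1"
    unfolding H_def by (subst aff_dim_hyperplane) (auto simp: axis_eq_0_iff)
  have "cbox u v \<subseteq> H"
    by (simp add: subset_iff H_def mem_box_cart inner_axis') (metis flat order.antisym)
  then have upper: "aff_dim (cbox u v) \<le> aff_dim H"
    by (rule aff_dim_subset)
  define B where "B = box (\<chi> i. if i = k then u$k - 1 else u$i) (\<chi> i. if i = k then v$k + 1 else v$i)"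
  have "(1 / 2) *\<^sub>R (u + v) \<in> H \<inter> B"
    using flat thick by (auto simp: H_def B_def mem_box_cart inner_axis')
  then have "aff_dim (H \<inter> B) = aff_dim H"
    by (intro aff_dim_convex_Int_open) (auto simp: H_def B_def convex_hyperplane simp del: Int_iff)
  moreover have "H \<inter> B \<subseteq> cbox u v"
  proof (clarsimp simp only: mem_box_cart Int_iff subset_iff)
    fix x i assume "x \<in> H" "x \<in> B"
    then show "u$i \<le> x$i \<and> x$i \<le> v$i"
      using flat by (cases "i = k") (auto simp: H_def B_def mem_box_cart inner_axis' dest!: spec[of _ i])
  qed
  ultimately have "aff_dim H \<le> aff_dim (cbox u v)"
    by (metis aff_dim_subset)
  with upper dim_H show ?thesis by simp
qed

lemma face_contact_cbox:
  fixes a b c d :: "real^3"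
  assumes "\<And>i. a$i < b$i" "\<And>i. c$i < d$i"
    and touch: "b$k = c$k"
    and overlap: "\<forall>i. i \<noteq> k \<longrightarrow> a$i < d$i \<and> c$i < b$i"
  shows "face_contact (cbox a b) (cbox c d)"
proof -
  have "cbox a b \<inter> cbox c d = cbox (\<chi> i. max (a$i) (c$i)) (\<chi> i. min (b$i) (d$i))"
    by (auto simp: mem_box_cart)
  moreover have "aff_dim \<dots> = int CARD(3) - 1"
  proof (rule aff_dim_cbox_flat[of _ k])
    show "(\<chi> i. max (a$i) (c$i)) $ k = (\<chi> i. min (b$i) (d$i)) $ k"
      using assms(1,2)[of k] touch by simp
    show "(\<chi> i. max (a$i) (c$i)) $ i < (\<chi> i. min (b$i) (d$i)) $ i" if "i \<noteq> k" for i
      using assms(1,2)[of i] overlap that by simp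
  qed
  ultimately show ?thesis
    by (simp add: face_contact_def convex_Int)
qed

lemma face_contact_commute: "face_contact A B \<longleftrightarrow> face_contact B A"
  by (simp add: face_contact_def Int_commute)

lemma inj_on_doubleton: "inj_on (\<lambda>(i, j). {i, j}) {(i, j :: 'a :: linorder). i < j}"
  by (auto simp: inj_on_def doubleton_eq_iff)

definition contact_pairs :: "nat \<Rightarrow> (nat \<times> nat) set" where
  "contact_pairs n = {(1, 2), (2, 3)} \<union> {1, 2, 3} \<times> {4..n} \<union> (\<lambda>k. (k, Suc k)) ` {4..<n}"

lemma contact_pairs_subset: "3 \<le> n \<Longrightarrow> contact_pairs n \<subseteq> {(i, j). 1 \<le> i \<and> i < j \<and> j \<le> n}"
  by (auto simp: contact_pairs_def)

lemma card_contact_pairs: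
  assumes "4 \<le> n"
  shows "card (contact_pairs n) = 4 * n - 11"
proof -
  have "card {(1 :: nat, 2 :: nat), (2, 3)} = 2"
    by simp
  moreover have "card ({1, 2, 3 :: nat} \<times> {4..n}) = 3 * (n - 3)"
    by (simp add: card_cartesian_product)
  moreover have "card ((\<lambda>k. (k, Suc k)) ` {4..<n}) = n - 4"
    by (simp add: card_image inj_on_def)
  moreover have "{(1 :: nat, 2 :: nat), (2, 3)} \<inter> {1, 2, 3} \<times> {4..n} = {}"
    and "({(1, 2), (2, 3)} \<union> {1, 2, 3} \<times> {4..n}) \<inter> (\<lambda>k. (k, Suc k)) ` {4..<n} = {}"
    by auto
  ultimately show ?thesis
    unfolding contact_pairs_def using assms by (simp add: card_Un_disjoint)
qed

locale decreasing_radii =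
  fixes n :: nat and r :: "nat \<Rightarrow> real"
  assumes four_le: "4 \<le> n"
    and antimono: "\<And>i j. 1 \<le> i \<Longrightarrow> i \<le> j \<Longrightarrow> j \<le> n \<Longrightarrow> r j \<le> r i"
    and pos: "\<And>i. 1 \<le> i \<Longrightarrow> i \<le> n \<Longrightarrow> 0 < r i"
    and tail_less: "(\<Sum>i = 4..n. r i) < r 3"
begin

definition offset :: "nat \<Rightarrow> real" where
  "offset k = 2 * (\<Sum>i = 4..<k. r i)"

definition corner :: "nat \<Rightarrow> real^3" where
  "corner k =
    (if k = 1 then vector [- 2 * r 1, 0, - 2 * r 1]
     else if k = 2 then vector [0, 0, - 2 * r 2]
     else if k = 3 then vector [r n, 0, 0]
     else vector [r n - 2 * r k, offset k, 0])"

definition opposite :: "nat \<Rightarrow> real^3" where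
  "opposite k = corner k + (2 * r k) *\<^sub>R 1"

definition centre :: "nat \<Rightarrow> real^3" where
  "centre k = corner k + r k *\<^sub>R 1"

lemma hcube_centre:
  assumes "1 \<le> k" "k \<le> n"
  shows "hcube (r k) (centre k) = cbox (corner k) (opposite k)"
proof -
  have "centre k - r k *\<^sub>R 1 = corner k" "centre k + r k *\<^sub>R 1 = opposite k"
    by (simp_all add: centre_def opposite_def vec_eq_iff)
  then show ?thesis
    using pos[OF assms] by (simp add: hcube_eq_cbox)
qed

lemma corner_less_opposite: "1 \<le> k \<Longrightarrow> k \<le> n \<Longrightarrow> corner k $ i < opposite k $ i"
  using pos by (simp add: opposite_def)

lemma offset_Suc: "4 \<le> k \<Longrightarrow> offset (Suc k) = offset k + 2 * r k"
  by (simp add: offset_def)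

lemma offset_mono: "k \<le> j \<Longrightarrow> j \<le> Suc n \<Longrightarrow> offset k \<le> offset j"
  unfolding offset_def by (intro mult_left_mono sum_mono2) (auto intro!: less_imp_le[OF pos])

lemma offset_nonneg: "k \<le> Suc n \<Longrightarrow> 0 \<le> offset k"
  using offset_mono[of 0 k] by (simp add: offset_def)

lemma offset_Suc_less: "4 \<le> k \<Longrightarrow> k \<le> n \<Longrightarrow> offset k + 2 * r k < 2 * r 3"
proof -
  assume k: "4 \<le> k" "k \<le> n"
  have "offset k + 2 * r k \<le> offset (Suc n)"
    using k offset_Suc offset_mono[of "Suc k" "Suc n"] by simp
  also have "\<dots> < 2 * r 3"
    using tail_less by (simp add: offset_def atLeastLessThanSuc_atLeastAtMost)
  finally show ?thesis .
qed

lemma radii_chain: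
  assumes "4 \<le> k" "k \<le> n"
  shows "0 < r n" "r n \<le> r k" "r k \<le> r 3" "r 3 \<le> r 2" "r 2 \<le> r 1"
  using assms four_le by (auto intro: pos antimono)

lemma cubes_separated:
  assumes "1 \<le> i" "i < j" "j \<le> n"
  shows "\<exists>l. opposite i $ l \<le> corner j $ l \<or> opposite j $ l \<le> corner i $ l"
proof -
  consider "i = 1" "j = 2" | "i = 1 \<or> i = 2" "3 \<le> j" | "i = 3" | "4 \<le> i"
    using assms by linarith
  then show ?thesis
  proof cases
    case 1
    then show ?thesis by (intro exI[of _ 1]) (simp add: opposite_def corner_def)
  next
    case 2
    then show ?thesis using assms by (intro exI[of _ 3]) (auto simp: opposite_def corner_def)
  next
    case 3
    then show ?thesis using assms by (intro exI[of _ 1]) (simp add: opposite_def corner_def)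
  next
    case 4
    then have "offset i + 2 * r i \<le> offset j"
      using assms offset_Suc[of i] offset_mono[of "Suc i" j] by simp
    then show ?thesis using 4 assms by (intro exI[of _ 2]) (simp add: opposite_def corner_def)
  qed
qed

lemma face_contact_contact_pairs:
  assumes "(i, j) \<in> contact_pairs n"
  shows "face_contact (cbox (corner i) (opposite i)) (cbox (corner j) (opposite j))"
proof -
  note radii = radii_chain[of i] radii_chain[of j] radii_chain[OF order.refl four_le]
    offset_nonneg[of j] offset_Suc_less[of j] offset_Suc[of i] four_le
  from assms consider "i = 1" "j = 2" | "i = 2" "j = 3" | "i = 1 \<or> i = 2" "4 \<le> j" "j \<le> n"
    | "i = 3" "4 \<le> j" "j \<le> n" | "4 \<le> i" "i < n" "j = Suc i"
    unfolding contact_pairs_def by auto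
  then show ?thesis
  proof cases
    case 1
    with radii show ?thesis
      by (intro face_contact_cbox[where k = 1] corner_less_opposite)
        (auto simp: forall_3 opposite_def corner_def)
  next
    case 2
    with radii show ?thesis
      by (intro face_contact_cbox[where k = 3] corner_less_opposite)
        (auto simp: forall_3 opposite_def corner_def)
  next
    case 3
    with radii show ?thesis
      by (intro face_contact_cbox[where k = 3] corner_less_opposite)
        (auto simp: forall_3 opposite_def corner_def)
  next
    case 4
    with radii have "face_contact (cbox (corner j) (opposite j)) (cbox (corner i) (opposite i))"
      by (intro face_contact_cbox[where k = 1] corner_less_opposite)
        (auto simp: forall_3 opposite_def corner_def)
    then show ?thesis
      by (simp add: face_contact_commute)
  next
    case 5
    with radii show ?thesis
      by (intro face_contact_cbox[where k = 2] corner_less_opposite)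
        (auto simp: forall_3 opposite_def corner_def)
  qed
qed

lemma homothetic_cube_packing_centre: "homothetic_cube_packing n r centre"
  unfolding homothetic_cube_packing_def
proof (intro ballI impI)
  fix i j assume i: "i \<in> {1..n}" and j: "j \<in> {1..n}" and "i \<noteq> j"
  then have "\<exists>l. opposite i $ l \<le> corner j $ l \<or> opposite j $ l \<le> corner i $ l"
    using cubes_separated[of i j] cubes_separated[of j i] by (cases "i < j") auto
  then show "interior (hcube (r i) (centre i)) \<inter> interior (hcube (r j) (centre j)) = {}"
    using i j by (auto simp: hcube_centre disjoint_interval_cart)
qed

lemma card_face_contacts_centre: "4 * n - 11 \<le> card (face_contacts n r centre)"
proof -
  have pairs: "contact_pairs n \<subseteq> {(i, j). 1 \<le> i \<and> i < j \<and> j \<le> n}"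
    using four_le by (intro contact_pairs_subset) simp
  have "(\<lambda>(i, j). {i, j}) ` contact_pairs n \<subseteq> face_contacts n r centre"
  proof clarify
    fix i j assume ij: "(i, j) \<in> contact_pairs n"
    with pairs have "1 \<le> i" "i < j" "j \<le> n" by auto
    with face_contact_contact_pairs[OF ij] show "{i, j} \<in> face_contacts n r centre"
      unfolding face_contacts_def by (force simp: hcube_centre)
  qed
  moreover have "finite (face_contacts n r centre)"
    by (rule finite_subset[of _ "Pow {1..n}"]) (auto simp: face_contacts_def)
  ultimately have "card ((\<lambda>(i, j). {i, j}) ` contact_pairs n) \<le> card (face_contacts n r centre)"
    by (rule card_mono[rotated])
  moreover have "inj_on (\<lambda>(i, j). {i, j}) (contact_pairs n)"
    using pairs by (blast intro: inj_on_subset[OF inj_on_doubleton])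
  ultimately show ?thesis
    using card_contact_pairs[OF four_le] by (simp add: card_image)
qed

end

theorem proposition25:
  fixes n :: nat and r :: "nat \<Rightarrow> real"
  assumes "n \<ge> 4"
    and "\<And>i j. 1 \<le> i \<Longrightarrow> i \<le> j \<Longrightarrow> j \<le> n \<Longrightarrow> r j \<le> r i"
    and "\<And>i. 1 \<le> i \<Longrightarrow> i \<le> n \<Longrightarrow> r i > 0"
    and "(\<Sum>i = 4..n. r i) < r 3"
  shows "\<exists>p :: nat \<Rightarrow> real^3. homothetic_cube_packing n r p
           \<and> card (face_contacts n r p) \<ge> 4 * n - 11
           \<and> (n \<ge> 9 \<longrightarrow> card (face_contacts n r p) > 3 * n - 3)"
proof -
  interpret decreasing_radii n r
    using assms by unfold_locales
  show ?thesis
    using homothetic_cube_packing_centre card_face_contacts_centre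
    by (intro exI[of _ centre]) auto
qed

end
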